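(* Let $R$ be a discrete valuation ring with maximal ideal $\mathfrak{m}$, and let $M$ be an $R$-module with $M\cong\bigoplus_{1\le i\le n}R/\mathfrak{m}^{k_i}$, where $k_1\ge\cdots\ge k_n$ are non-negative integers. Let $N$ be a quotient of $M$ generated by $j$ elements, where $j\le n$. Then the length satisfies $l(N)\le k_1+\cdots+k_j$. Moreover, if equality holds, then $N$ is a direct summand of $M$. *)

theory Defs
  imports Main "HOL-Library.Extended_Nat"
begin

definition ring_ideal :: "'a::comm_ring_1 set \<Rightarrow> bool" where
  "ring_ideal I \<longleftrightarrow> module.subspace ((*) :: 'a \<Rightarrow> 'a \<Rightarrow> 'a) I"

definition principal_ideal :: "'a::comm_ring_1 set \<Rightarrow> bool" where
  "principal_ideal I \<longleftrightarrow> (\<exists>a. I = {a * x | x. True})"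

definition maximal_ideal :: "'a::comm_ring_1 set \<Rightarrow> bool" where
  "maximal_ideal I \<longleftrightarrow> ring_ideal I \<and> I \<noteq> UNIV \<and>
     (\<forall>J. ring_ideal J \<and> I \<subseteq> J \<longrightarrow> J = I \<or> J = UNIV)"

definition is_DVR :: "'a::idom itself \<Rightarrow> bool" where
  "is_DVR _ \<longleftrightarrow> (\<forall>I::'a set. ring_ideal I \<longrightarrow> principal_ideal I)
     \<and> (\<exists>!m::'a set. maximal_ideal m)
     \<and> (\<exists>x::'a. x \<noteq> 0 \<and> \<not> x dvd 1)"

definition ideal_prod :: "'a::comm_ring_1 set \<Rightarrow> 'a set \<Rightarrow> 'a set" where
  "ideal_prod I J = module.span ((*) :: 'a \<Rightarrow> 'a \<Rightarrow> 'a) {x * y | x y. x \<in> I \<and> y \<in> J}"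

fun ideal_pow :: "'a::comm_ring_1 set \<Rightarrow> nat \<Rightarrow> 'a set" where
  "ideal_pow I 0 = UNIV"
| "ideal_pow I (Suc k) = ideal_prod I (ideal_pow I k)"

text \<open>The module (scalar multiplication s) is isomorphic to the direct sum
  of R/m^(k i), i < n: there are elements e i (the images of the standard generators)
  such that the map ([r_i])_i \<mapsto> \<Sum> r_i e_i from the direct sum is well defined,
  injective and surjective, i.e. \<Sum> r_i e_i = 0 iff every r_i \<in> m^(k i), and
  every element is of this form.\<close>
definition iso_sum_cyclic ::
  "('a::comm_ring_1 \<Rightarrow> 'm::ab_group_add \<Rightarrow> 'm) \<Rightarrow> 'a set \<Rightarrow> (nat \<Rightarrow> nat) \<Rightarrow> nat \<Rightarrow> bool" where
  "iso_sum_cyclic s m k n \<longleftrightarrow> (\<exists>e :: nat \<Rightarrow> 'm.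
      (\<forall>x. \<exists>r. x = (\<Sum>i<n. s (r i) (e i))) \<and>
      (\<forall>r. (\<Sum>i<n. s (r i) (e i)) = 0 \<longleftrightarrow> (\<forall>i<n. r i \<in> ideal_pow m (k i))))"

definition module_length :: "('a::comm_ring_1 \<Rightarrow> 'm::ab_group_add \<Rightarrow> 'm) \<Rightarrow> enat" where
  "module_length s = Sup {enat l | l. \<exists>c :: nat \<Rightarrow> 'm set.
      (\<forall>i\<le>l. module.subspace s (c i)) \<and> (\<forall>i<l. c i \<subset> c (Suc i))}"

definition iso_direct_summand ::
  "('a::comm_ring_1 \<Rightarrow> 'n::ab_group_add \<Rightarrow> 'n) \<Rightarrow> ('a \<Rightarrow> 'm::ab_group_add \<Rightarrow> 'm) \<Rightarrow> bool" where
  "iso_direct_summand sN sM \<longleftrightarrow> (\<exists>A B. module.subspace sM A \<and> module.subspace sM B \<and>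
      A \<inter> B = {0} \<and> (\<forall>x. \<exists>a\<in>A. \<exists>b\<in>B. x = a + b) \<and>
      (\<exists>h. module_hom sN sM h \<and> inj h \<and> range h = A))"

end

theory Submission
  imports Defs "HOL-Combinatorics.Transposition"
begin

text \<open>
  Let p generate the maximal ideal. The statement is proved for subquotients V/W of N that are
  quotients of the direct sum of the R/(p^k_i), i < n (via images u_i of the cyclic generators), and
  are generated by j elements g_i, by induction on the sum of the k_i. Let K = k_0 be the largest
  exponent. If p^(K-1) kills V/W, every exponent can be lowered to at most K - 1. Otherwise some
  g_q has p^(K-1) g_q \<notin> W; writing g_q through the u_i, the coefficient of some u_i with k_i = K must
  be a unit, so g_q can replace that u_i. The step from W to W + R g_q has length at most K, and
  V/(W + R g_q) is presented by the remaining n - 1 cyclic modules and j - 1 generators, so the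
  lengths add up to at most k_0 + ... + k_(j-1). If this bound is attained, the remaining quotient
  has extremal length as well, and a lift x of g_q with p^K x = 0 extends the complement obtained
  by induction; for W = 0 and V = N this is a submodule of M mapped isomorphically onto N.
\<close>

section \<open>Discrete valuation rings\<close>

lemma module_mult: "module ((*) :: 'a::comm_ring_1 \<Rightarrow> 'a \<Rightarrow> 'a)"
  by unfold_locales (auto simp: algebra_simps)

lemma ring_ideal_iff:
  "ring_ideal (I::'a::comm_ring_1 set) \<longleftrightarrow>
     0 \<in> I \<and> (\<forall>x\<in>I. \<forall>y\<in>I. x + y \<in> I) \<and> (\<forall>c. \<forall>x\<in>I. c * x \<in> I)"
  unfolding ring_ideal_def module.subspace_def[OF module_mult] by blast

lemma ring_ideal_principal: "ring_ideal {r * x | x. True}"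
  unfolding ring_ideal_iff
proof (intro conjI ballI allI)
  show "0 \<in> {r * x | x. True}"
    by (metis (mono_tags) mem_Collect_eq mult_zero_right)
  show "x + y \<in> {r * x | x. True}" if "x \<in> {r * x | x. True}" "y \<in> {r * x | x. True}" for x y
    using that by (auto simp: distrib_left[symmetric])
  show "c * x \<in> {r * x | x. True}" if "x \<in> {r * x | x. True}" for c x
    using that mult.left_commute by blast
qed

lemma ring_ideal_eq_UNIV: "ring_ideal I \<Longrightarrow> 1 \<in> I \<Longrightarrow> I = UNIV"
  unfolding ring_ideal_iff by (metis UNIV_eq_I mult_1_right)

lemma ring_ideal_Union_chain:
  assumes "C \<noteq> {}" and "\<And>I. I \<in> C \<Longrightarrow> ring_ideal I"
    and "\<And>I J. I \<in> C \<Longrightarrow> J \<in> C \<Longrightarrow> I \<subseteq> J \<or> J \<subseteq> I"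
  shows "ring_ideal (\<Union>C)"
  unfolding ring_ideal_iff
proof (intro conjI ballI allI)
  show "0 \<in> \<Union>C"
    using assms(1,2) unfolding ring_ideal_iff by blast
  show "x + y \<in> \<Union>C" if xy: "x \<in> \<Union>C" "y \<in> \<Union>C" for x y
  proof -
    obtain I J where "I \<in> C" "J \<in> C" "x \<in> I" "y \<in> J"
      using xy by blast
    with assms(2) assms(3)[of I J] show ?thesis
      unfolding ring_ideal_iff by blast
  qed
  show "c * x \<in> \<Union>C" if "x \<in> \<Union>C" for c x
    using that assms(2) unfolding ring_ideal_iff by blast
qed

lemma nonunit_in_maximal_ideal:
  fixes r :: "'a::comm_ring_1"
  assumes "\<not> r dvd 1"
  obtains M where "maximal_ideal M" and "r \<in> M"
proof -
  let ?A = "{J. ring_ideal J \<and> r \<in> J \<and> 1 \<notin> J}"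
  have "\<exists>M\<in>?A. \<forall>J\<in>?A. M \<subseteq> J \<longrightarrow> J = M"
  proof (rule subset_Zorn_nonempty)
    have "r \<in> {r * x | x. True}"
      by (auto intro!: exI[of _ 1])
    moreover have "1 \<notin> {r * x | x. True}"
      using assms by (auto simp: dvd_def)
    ultimately have "{r * x | x. True} \<in> ?A"
      using ring_ideal_principal by blast
    then show "?A \<noteq> {}"
      by blast
  next
    fix C assume C: "C \<noteq> {}" "subset.chain ?A C"
    then have "C \<subseteq> ?A" and "\<And>I J. I \<in> C \<Longrightarrow> J \<in> C \<Longrightarrow> I \<subseteq> J \<or> J \<subseteq> I"
      by (auto simp: subset.chain_def)
    with C(1) ring_ideal_Union_chain[of C] show "\<Union>C \<in> ?A"
      by blast
  qed
  then obtain M where M: "M \<in> ?A" and M_max: "\<forall>J\<in>?A. M \<subseteq> J \<longrightarrow> J = M"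
    by blast
  have "J = M \<or> J = UNIV" if "ring_ideal J" "M \<subseteq> J" for J
    using M M_max ring_ideal_eq_UNIV[OF that(1)] that by blast
  with M have "maximal_ideal M"
    unfolding maximal_ideal_def by blast
  with M that show thesis
    by blast
qed

lemma DVR_uniformizer:
  fixes m :: "'a::idom set"
  assumes dvr: "is_DVR TYPE('a)" and max: "maximal_ideal m"
  obtains p where "m = {p * x | x. True}" and "\<And>r. r dvd 1 \<or> p dvd r"
proof -
  have "ring_ideal m"
    using max unfolding maximal_ideal_def by blast
  with dvr have "principal_ideal m"
    unfolding is_DVR_def by blast
  then obtain p where m: "m = {p * x | x. True}"
    unfolding principal_ideal_def by blast
  have unique: "\<exists>!m::'a set. maximal_ideal m"
    using dvr unfolding is_DVR_def by blast
  have "p dvd r" if nonunit: "\<not> r dvd 1" for r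
  proof -
    obtain M where "maximal_ideal M" "r \<in> M"
      using nonunit_in_maximal_ideal[OF nonunit] by blast
    moreover have "M = m"
      using unique max \<open>maximal_ideal M\<close> by (auto elim: ex1E)
    ultimately show ?thesis
      using m by auto
  qed
  with m that show thesis
    by blast
qed

lemma ideal_pow_principal:
  fixes p :: "'a::comm_ring_1"
  shows "ideal_pow {p * x | x. True} t = {p ^ t * x | x. True}"
proof (induction t)
  case 0
  then show ?case
    by auto
next
  case (Suc t)
  have products: "{x * y | x y. x \<in> {p * x | x. True} \<and> y \<in> {p ^ t * x | x. True}} =
      {p ^ Suc t * x | x. True}"
  proof (intro equalityI subsetI)
    fix z assume "z \<in> {x * y | x y. x \<in> {p * x | x. True} \<and> y \<in> {p ^ t * x | x. True}}"
    then obtain x y where "z = x * y" "x \<in> {p * x | x. True}" "y \<in> {p ^ t * x | x. True}"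
      by blast
    then obtain a b where "z = (p * a) * (p ^ t * b)"
      by blast
    then have "z = p ^ Suc t * (a * b)"
      by (simp add: ac_simps)
    then show "z \<in> {p ^ Suc t * x | x. True}"
      by blast
  next
    fix z assume "z \<in> {p ^ Suc t * x | x. True}"
    then obtain a where "z = p ^ Suc t * a"
      by blast
    then have "z = (p * a) * (p ^ t * 1)"
      by (simp add: ac_simps)
    then show "z \<in> {x * y | x y. x \<in> {p * x | x. True} \<and> y \<in> {p ^ t * x | x. True}}"
      by (intro CollectI exI[of _ "p * a"] exI[of _ "p ^ t * 1"]) blast
  qed
  have "module.subspace (*) {p ^ Suc t * x | x. True}"
    using ring_ideal_principal unfolding ring_ideal_def .
  then show ?case
    unfolding ideal_pow.simps ideal_prod_def Suc.IH products
    by (rule module.span_eq_iff[OF module_mult, THEN iffD2])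
qed

text \<open>\<open>h \<circ> Transposition.transpose 0 q \<circ> Suc\<close> enumerates the h i with i < j other than h q.\<close>
lemma sum_lessThan_transpose_Suc:
  fixes h :: "nat \<Rightarrow> 'b::comm_monoid_add"
  assumes "q < j"
  shows "(\<Sum>i<j. h i) = h q + (\<Sum>i<j - 1. h (Transposition.transpose 0 q (Suc i)))"
proof -
  have "(\<Sum>i<j. h i) = (\<Sum>i<j. h (Transposition.transpose 0 q i))"
    by (rule sum.reindex_bij_witness[where i = "Transposition.transpose 0 q"
          and j = "Transposition.transpose 0 q"])
      (use assms in \<open>auto simp: Transposition.transpose_def\<close>)
  also have "\<dots> = h q + (\<Sum>i<j - 1. h (Transposition.transpose 0 q (Suc i)))"
    using assms sum.lessThan_Suc_shift[of "\<lambda>i. h (Transposition.transpose 0 q i)" "j - 1"] by simp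
  finally show ?thesis .
qed

lemma transpose_apply_eq:
  assumes "f a = f b"
  shows "f (Transposition.transpose a b x) = f x"
  using assms by (simp add: Transposition.transpose_def)

lemma sum_lessThan_min_less:
  fixes k :: "nat \<Rightarrow> nat"
  assumes "0 < j" and "0 < k 0"
  shows "(\<Sum>i<j. min (k i) (k 0 - 1)) < (\<Sum>i<j. k i)"
proof (rule sum_strict_mono_ex1)
  show "\<forall>i\<in>{..<j}. min (k i) (k 0 - 1) \<le> k i"
    by simp
  show "\<exists>i\<in>{..<j}. min (k i) (k 0 - 1) < k i"
    using assms by (intro bexI[of _ 0]) auto
qed simp

lemma sum_lessThan_shift_pred:
  fixes k :: "nat \<Rightarrow> 'b::comm_monoid_add"
  assumes "0 < n"
  shows "(\<Sum>i<n. k i) = k 0 + (\<Sum>i<n - 1. (k \<circ> Suc) i)"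
  using assms sum.lessThan_Suc_shift[of k "n - 1"] by simp

section \<open>Lengths of subquotients\<close>

definition submodule_chain ::
  "('a::comm_ring_1 \<Rightarrow> 'b::ab_group_add \<Rightarrow> 'b) \<Rightarrow> 'b set \<Rightarrow> 'b set \<Rightarrow> (nat \<Rightarrow> 'b set) \<Rightarrow> nat \<Rightarrow> bool"
  where "submodule_chain s W V c l \<longleftrightarrow>
    (\<forall>i\<le>l. module.subspace s (c i) \<and> W \<subseteq> c i \<and> c i \<subseteq> V) \<and> (\<forall>i<l. c i \<subset> c (Suc i))"

definition quotient_length_le ::
  "('a::comm_ring_1 \<Rightarrow> 'b::ab_group_add \<Rightarrow> 'b) \<Rightarrow> 'b set \<Rightarrow> 'b set \<Rightarrow> nat \<Rightarrow> bool"
  where "quotient_length_le s W V b \<longleftrightarrow> (\<forall>c l. submodule_chain s W V c l \<longrightarrow> l \<le> b)"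

definition generates_mod ::
  "('a::comm_ring_1 \<Rightarrow> 'b::ab_group_add \<Rightarrow> 'b) \<Rightarrow> 'b set \<Rightarrow> 'b set \<Rightarrow> (nat \<Rightarrow> 'b) \<Rightarrow> nat \<Rightarrow> bool"
  where "generates_mod s W V g j \<longleftrightarrow>
    (\<forall>i<j. g i \<in> V) \<and> (\<forall>v\<in>V. \<exists>r. v - (\<Sum>i<j. s (r i) (g i)) \<in> W)"

context module
begin

lemma submodule_chain_const: "subspace W \<Longrightarrow> W \<subseteq> V \<Longrightarrow> submodule_chain scale W V (\<lambda>_. W) 0"
  by (simp add: submodule_chain_def)

lemma submodule_chain_truncate: "submodule_chain scale W V c l \<Longrightarrow> l' \<le> l \<Longrightarrow> submodule_chain scale W V c l'"
  by (simp add: submodule_chain_def)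

lemma quotient_length_le_mono: "quotient_length_le scale W V b \<Longrightarrow> b \<le> b' \<Longrightarrow> quotient_length_le scale W V b'"
  unfolding quotient_length_le_def by (meson order_trans)

lemma quotient_length_le_zero:
  assumes "V \<subseteq> W"
  shows "quotient_length_le scale W V 0"
  unfolding quotient_length_le_def
proof (intro allI impI)
  fix c l assume c: "submodule_chain scale W V c l"
  show "l \<le> 0"
  proof (rule ccontr)
    assume "\<not> l \<le> 0"
    with c have "W \<subseteq> c 0" "c 0 \<subset> c 1" "c 1 \<subseteq> V"
      unfolding submodule_chain_def by auto
    with assms show False
      by blast
  qed
qed

lemma quotient_length_le_if_no_chain:
  assumes "\<nexists>c. submodule_chain scale W V c l"
  shows "quotient_length_le scale W V (l - 1)"
  unfolding quotient_length_le_def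
proof (intro allI impI)
  fix c l' assume "submodule_chain scale W V c l'"
  with assms have "\<not> l \<le> l'"
    using submodule_chain_truncate by blast
  then show "l' \<le> l - 1"
    by simp
qed

lemma submodule_chain_compress:
  assumes "\<forall>i\<le>l. subspace (d i) \<and> W \<subseteq> d i \<and> d i \<subseteq> V" and "\<forall>i<l. d i \<subseteq> d (Suc i)"
  shows "\<exists>c. submodule_chain scale W V c (card {i. i < l \<and> d i \<noteq> d (Suc i)})
    \<and> c (card {i. i < l \<and> d i \<noteq> d (Suc i)}) = d l"
  using assms
proof (induction l)
  case 0
  then show ?case
    by (intro exI[of _ "\<lambda>_. d 0"]) (simp add: submodule_chain_def)
next
  case (Suc l)
  let ?J = "\<lambda>l. {i. i < l \<and> d i \<noteq> d (Suc i)}"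
  obtain c where c: "submodule_chain scale W V c (card (?J l))" "c (card (?J l)) = d l"
    using Suc by auto
  show ?case
  proof (cases "d l = d (Suc l)")
    case True
    then have "?J (Suc l) = ?J l"
      using less_Suc_eq by auto
    then show ?thesis
      using c True by auto
  next
    case False
    then have "?J (Suc l) = insert l (?J l)"
      using less_Suc_eq by auto
    then have card: "card (?J (Suc l)) = Suc (card (?J l))"
      by simp
    let ?N = "card (?J l)"
    let ?c = "c(Suc ?N := d (Suc l))"
    have step: "d l \<subset> d (Suc l)"
      using False Suc.prems(2) by auto
    have "submodule_chain scale W V ?c (Suc ?N)"
      unfolding submodule_chain_def
    proof (rule conjI; intro allI impI)
      fix i assume "i \<le> Suc ?N"
      then show "subspace (?c i) \<and> W \<subseteq> ?c i \<and> ?c i \<subseteq> V"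
        using c(1) Suc.prems(1) by (cases "i = Suc ?N") (auto simp: submodule_chain_def)
    next
      fix i assume "i < Suc ?N"
      then show "?c i \<subset> ?c (Suc i)"
        using c step by (cases "i = ?N") (auto simp: submodule_chain_def)
    qed
    moreover have "?c (Suc ?N) = d (Suc l)"
      by simp
    ultimately show ?thesis
      unfolding card by blast
  qed
qed

lemma mem_span_Un_subspace:
  assumes "subspace P" and "subspace Q"
  shows "x \<in> span (P \<union> Q) \<longleftrightarrow> (\<exists>y\<in>P. \<exists>z\<in>Q. x = y + z)"
  using assms by (auto simp: span_Un span_eq_iff[THEN iffD2])

lemma subspace_eq_if_Int_and_span_Un_eq:
  assumes P: "subspace P" and Q: "subspace Q" and B: "subspace B" and "P \<subseteq> Q"
    and Int_eq: "P \<inter> B = Q \<inter> B" and Un_eq: "span (P \<union> B) = span (Q \<union> B)"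
  shows "P = Q"
proof (intro equalityI subsetI)
  fix x assume "x \<in> Q"
  then have "x \<in> span (P \<union> B)"
    using Un_eq span_superset by blast
  then obtain y z where yz: "y \<in> P" "z \<in> B" "x = y + z"
    using mem_span_Un_subspace[OF P B] by blast
  then have "z \<in> Q"
    using \<open>x \<in> Q\<close> \<open>P \<subseteq> Q\<close> subspace_diff[OF Q, of x y] by auto
  with yz Int_eq have "z \<in> P"
    by blast
  with yz P show "x \<in> P"
    using subspace_add by blast
qed (use \<open>P \<subseteq> Q\<close> in blast)

text \<open>By the modular law, each strict step of a chain is strict either after intersecting
  with B or after adding B.\<close>
lemma submodule_chain_length_le_jumps:
  assumes c: "submodule_chain scale W V c l" and B: "subspace B"
  shows "l \<le> card {i. i < l \<and> c i \<inter> B \<noteq> c (Suc i) \<inter> B}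
    + card {i. i < l \<and> span (c i \<union> B) \<noteq> span (c (Suc i) \<union> B)}"
    (is "l \<le> card ?J1 + card ?J2")
proof -
  have "{..<l} \<subseteq> ?J1 \<union> ?J2"
  proof
    fix i assume "i \<in> {..<l}"
    with c have strict: "c i \<subset> c (Suc i)" and ci: "subspace (c i)" "subspace (c (Suc i))"
      unfolding submodule_chain_def by auto
    show "i \<in> ?J1 \<union> ?J2"
    proof (rule ccontr)
      assume "i \<notin> ?J1 \<union> ?J2"
      with \<open>i \<in> {..<l}\<close> have "c i \<inter> B = c (Suc i) \<inter> B" and "span (c i \<union> B) = span (c (Suc i) \<union> B)"
        by simp_all
      then have "c i = c (Suc i)"
        using strict by (intro subspace_eq_if_Int_and_span_Un_eq[OF ci B]) simp_all
      with strict show False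
        by blast
    qed
  qed
  then have "l \<le> card (?J1 \<union> ?J2)"
    using card_mono[of "?J1 \<union> ?J2" "{..<l}"] by simp
  also have "\<dots> \<le> card ?J1 + card ?J2"
    by (rule card_Un_le)
  finally show ?thesis .
qed

lemma quotient_length_le_add:
  assumes B: "subspace B" and V: "subspace V" and "W \<subseteq> B" "B \<subseteq> V"
    and lower: "quotient_length_le scale W B a" and upper: "quotient_length_le scale B V b"
  shows "quotient_length_le scale W V (a + b)"
  unfolding quotient_length_le_def
proof (intro allI impI)
  fix c l assume c: "submodule_chain scale W V c l"
  let ?lower = "\<lambda>i. c i \<inter> B" and ?upper = "\<lambda>i. span (c i \<union> B)"
  let ?J = "\<lambda>d. {i. i < l \<and> d i \<noteq> d (Suc i)}"
  have mono: "\<forall>i<l. c i \<subseteq> c (Suc i)"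
    using c unfolding submodule_chain_def by auto
  have "\<forall>i\<le>l. subspace (?lower i) \<and> W \<subseteq> ?lower i \<and> ?lower i \<subseteq> B"
    using c B \<open>W \<subseteq> B\<close> subspace_inter unfolding submodule_chain_def by blast
  moreover have "\<forall>i<l. ?lower i \<subseteq> ?lower (Suc i)"
    using mono by blast
  ultimately obtain c1 where "submodule_chain scale W B c1 (card (?J ?lower))"
    using submodule_chain_compress[of l ?lower W B] by blast
  with lower have J1: "card (?J ?lower) \<le> a"
    unfolding quotient_length_le_def by blast
  have "\<forall>i\<le>l. subspace (?upper i) \<and> B \<subseteq> ?upper i \<and> ?upper i \<subseteq> V"
  proof (intro allI impI conjI)
    fix i assume "i \<le> l"
    with c have "c i \<subseteq> V"
      unfolding submodule_chain_def by blast
    with V \<open>B \<subseteq> V\<close> show "?upper i \<subseteq> V"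
      by (intro span_minimal) auto
    show "B \<subseteq> ?upper i"
      using span_superset by blast
  qed simp
  moreover have "\<forall>i<l. ?upper i \<subseteq> ?upper (Suc i)"
    using mono by (auto intro!: span_mono)
  ultimately obtain c2 where "submodule_chain scale B V c2 (card (?J ?upper))"
    using submodule_chain_compress[of l ?upper B V] by blast
  with upper have J2: "card (?J ?upper) \<le> b"
    unfolding quotient_length_le_def by blast
  show "l \<le> a + b"
    using submodule_chain_length_le_jumps[OF c B] J1 J2 by linarith
qed

lemma submodule_chain_upper:
  assumes B: "subspace B" and V: "subspace V" and "W \<subseteq> B" "B \<subseteq> V"
    and lower: "quotient_length_le scale W B a" and chain: "submodule_chain scale W V c (a + b)"
  obtains c' where "submodule_chain scale B V c' b"
proof (cases "\<exists>c'. submodule_chain scale B V c' b")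
  case False
  then have "quotient_length_le scale B V (b - 1)"
    by (rule quotient_length_le_if_no_chain)
  with assms have "quotient_length_le scale W V (a + (b - 1))"
    using quotient_length_le_add by blast
  with chain have "a + b \<le> a + (b - 1)"
    unfolding quotient_length_le_def by blast
  then have "b = 0"
    by simp
  with that submodule_chain_const[OF B \<open>B \<subseteq> V\<close>] show ?thesis
    by blast
qed blast

lemma module_length_le:
  assumes "quotient_length_le scale {0} UNIV b"
  shows "module_length scale \<le> enat b"
  unfolding module_length_def
proof (rule Sup_least)
  fix z assume "z \<in> {enat l | l. \<exists>c. (\<forall>i\<le>l. subspace (c i)) \<and> (\<forall>i<l. c i \<subset> c (Suc i))}"
  then obtain l c where z: "z = enat l" and "\<forall>i\<le>l. subspace (c i)" and "\<forall>i<l. c i \<subset> c (Suc i)"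
    by blast
  then have "submodule_chain scale {0} UNIV c l"
    unfolding submodule_chain_def using subspace_0 by blast
  with assms z show "z \<le> enat b"
    unfolding quotient_length_le_def by simp
qed

lemma submodule_chain_of_module_length:
  assumes "module_length scale = enat l"
  obtains c where "submodule_chain scale {0} UNIV c l"
proof (cases "\<exists>c. submodule_chain scale {0} UNIV c l")
  case False
  then have "quotient_length_le scale {0} UNIV (l - 1)"
    by (rule quotient_length_le_if_no_chain)
  then have "enat l \<le> enat (l - 1)"
    using module_length_le assms by metis
  then have "l = 0"
    by simp
  with that submodule_chain_const[of "{0}" UNIV] show ?thesis
    by simp
qed blast

lemma iso_sum_cyclic_generators:
  assumes "iso_sum_cyclic scale {p * x | x. True} k n"
  obtains e where "\<And>x. \<exists>r. x = (\<Sum>i<n. r i *s e i)" and "\<And>i. i < n \<Longrightarrow> p ^ k i *s e i = 0"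
proof -
  obtain e where gen: "\<forall>x. \<exists>r. x = (\<Sum>i<n. r i *s e i)"
    and rel: "\<forall>r. (\<Sum>i<n. r i *s e i) = 0 \<longleftrightarrow> (\<forall>i<n. r i \<in> {p ^ k i * x | x. True})"
    using assms unfolding iso_sum_cyclic_def ideal_pow_principal by blast
  have "p ^ k i *s e i = 0" if "i < n" for i
  proof -
    let ?r = "\<lambda>l. if l = i then p ^ k i else 0"
    have "?r l = p ^ k l * (if l = i then 1 else 0)" for l
      by simp
    then have "\<forall>l<n. ?r l \<in> {p ^ k l * x | x. True}"
      by blast
    then have "(\<Sum>l<n. ?r l *s e l) = 0"
      using spec[OF rel, of ?r] by blast
    moreover have "(\<Sum>l<n. ?r l *s e l) = (\<Sum>l<n. if l = i then p ^ k i *s e l else 0)"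
      by (rule sum.cong) auto
    ultimately show ?thesis
      using that by simp
  qed
  with gen that show thesis
    by blast
qed

lemma mem_span_insert_subspace:
  "subspace W \<Longrightarrow> x \<in> span (insert g W) \<longleftrightarrow> (\<exists>t. x - t *s g \<in> W)"
  by (simp add: span_breakdown_eq span_eq_iff[THEN iffD2])

lemma span_image_lessThan_sum:
  fixes j :: nat
  assumes "x \<in> span (g ` {..<j})"
  shows "\<exists>r. x = (\<Sum>i<j. r i *s g i)"
  using assms
proof (induction rule: span_induct_alt)
  case base
  show ?case
    by (intro exI[of _ "\<lambda>_. 0"]) simp
next
  case (step c x y)
  then obtain q r where q: "q < j" "x = g q" and r: "y = (\<Sum>i<j. r i *s g i)"
    by blast
  have "(\<Sum>i<j. (if i = q then c else 0) *s g i) = (\<Sum>i<j. if i = q then c *s g i else 0)"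
    by (rule sum.cong) auto
  also have "\<dots> = c *s x"
    using q by simp
  finally have "c *s x + y = (\<Sum>i<j. (if i = q then c else 0) *s g i) + (\<Sum>i<j. r i *s g i)"
    using r by simp
  also have "\<dots> = (\<Sum>i<j. ((if i = q then c else 0) + r i) *s g i)"
    by (simp add: scale_left_distrib sum.distrib)
  finally show ?case
    by (intro exI[of _ "\<lambda>i. (if i = q then c else 0) + r i"])
qed

lemma pow_scale_sum_mem:
  fixes n :: nat
  assumes W: "subspace W" and torsion: "\<And>i. i < n \<Longrightarrow> a ^ k i *s u i \<in> W"
    and bound: "\<And>i. i < n \<Longrightarrow> k i \<le> K"
  shows "a ^ K *s (\<Sum>i<n. r i *s u i) \<in> W"
proof -
  have "a ^ K *s (\<Sum>i<n. r i *s u i) = (\<Sum>i<n. (r i * a ^ (K - k i)) *s (a ^ k i *s u i))"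
    unfolding scale_sum_right
  proof (rule sum.cong[OF refl])
    fix i assume "i \<in> {..<n}"
    then have "a ^ K = a ^ (K - k i) * a ^ k i"
      using bound by (simp flip: power_add)
    then show "a ^ K *s r i *s u i = (r i * a ^ (K - k i)) *s a ^ k i *s u i"
      by (simp add: ac_simps)
  qed
  also have "\<dots> \<in> W"
    by (rule subspace_sum[OF W], rule subspace_scale[OF W], rule torsion) simp
  finally show ?thesis .
qed

lemma generates_mod_scale_mem:
  assumes W: "subspace W" and gen: "generates_mod scale W V g j"
    and kills: "\<And>i. i < j \<Longrightarrow> a *s g i \<in> W" and "v \<in> V"
  shows "a *s v \<in> W"
proof -
  obtain r where r: "v - (\<Sum>i<j. r i *s g i) \<in> W"
    using gen \<open>v \<in> V\<close> unfolding generates_mod_def by blast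
  have "a *s (\<Sum>i<j. r i *s g i) = (\<Sum>i<j. r i *s (a *s g i))"
    by (simp add: scale_sum_right mult.commute)
  also have "\<dots> \<in> W"
    by (rule subspace_sum[OF W], rule subspace_scale[OF W], rule kills) simp
  finally have "a *s (v - (\<Sum>i<j. r i *s g i)) + a *s (\<Sum>i<j. r i *s g i) \<in> W"
    by (rule subspace_add[OF W subspace_scale[OF W r]])
  then show ?thesis
    by (simp add: scale_right_diff_distrib)
qed

lemma generates_mod_exchange:
  assumes W: "subspace W" and gen: "generates_mod scale W V g j" and "q < j"
    and y: "y - (\<Sum>i<j. r i *s g i) \<in> W" and unit: "r q dvd 1"
  shows "generates_mod scale (span (insert y W)) V (g \<circ> Transposition.transpose 0 q \<circ> Suc) (j - 1)"
    (is "generates_mod scale ?W' V ?g' (j - 1)")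
  unfolding generates_mod_def
proof (intro conjI allI impI ballI)
  let ?\<sigma> = "\<lambda>i. Transposition.transpose 0 q (Suc i)"
  show "?g' i \<in> V" if "i < j - 1" for i
    using gen that \<open>q < j\<close> unfolding generates_mod_def
    by (auto simp: Transposition.transpose_def)
  fix v assume "v \<in> V"
  then obtain c where c: "v - (\<Sum>i<j. c i *s g i) \<in> W"
    using gen unfolding generates_mod_def by blast
  obtain u where u: "1 = r q * u"
    using unit by (auto elim: dvdE)
  define a where "a = c q * u"
  have split: "(\<Sum>i<j. b i *s g i) = b q *s g q + (\<Sum>i<j - 1. b (?\<sigma> i) *s ?g' i)" for b
    using sum_lessThan_transpose_Suc[OF \<open>q < j\<close>, of "\<lambda>i. b i *s g i"] by simp
  define Sc where "Sc = (\<Sum>i<j - 1. c (?\<sigma> i) *s ?g' i)"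
  define Sr where "Sr = (\<Sum>i<j - 1. r (?\<sigma> i) *s ?g' i)"
  have "a * r q = c q"
    using u unfolding a_def by (metis mult.assoc mult.commute mult_1_right)
  then have coeff: "a *s (r q *s g q) = c q *s g q"
    by simp
  have sum_eq: "(\<Sum>i<j - 1. (c (?\<sigma> i) - a * r (?\<sigma> i)) *s ?g' i) = Sc - a *s Sr"
    unfolding Sc_def Sr_def by (simp add: scale_left_diff_distrib scale_sum_right sum_subtractf)
  have rearrange: "v - (Sc - a *s Sr)
      = ((v - (c q *s g q + Sc)) - a *s (y - (r q *s g q + Sr))) + a *s y"
    using coeff by (simp add: scale_right_diff_distrib scale_right_distrib)
  have "(v - (c q *s g q + Sc)) - a *s (y - (r q *s g q + Sr)) \<in> W"
    using subspace_diff[OF W c subspace_scale[OF W y]] unfolding split Sc_def Sr_def .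
  then have "v - (\<Sum>i<j - 1. (c (?\<sigma> i) - a * r (?\<sigma> i)) *s ?g' i) - a *s y \<in> W"
    unfolding sum_eq rearrange by simp
  then have "v - (\<Sum>i<j - 1. (c (?\<sigma> i) - a * r (?\<sigma> i)) *s ?g' i) \<in> ?W'"
    using mem_span_insert_subspace[OF W] by blast
  then show "\<exists>b. v - (\<Sum>i<j - 1. b i *s ?g' i) \<in> ?W'"
    by (intro exI[of _ "\<lambda>i. c (?\<sigma> i) - a * r (?\<sigma> i)"])
qed

end

section \<open>Modules over a local ring with principal maximal ideal\<close>

text \<open>The nonunits are exactly the multiples of p, as for a DVR with uniformizer p.\<close>
locale dvr_module = module +
  fixes p :: 'a
  assumes unit_or_dvd: "\<And>r. r dvd 1 \<or> p dvd r"
begin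

lemma subspace_between_simple_extension:
  assumes W: "subspace W" and pg: "p *s g \<in> W"
    and U: "subspace U" and "W \<subseteq> U" and "U \<subseteq> span (insert g W)"
  shows "U = W \<or> U = span (insert g W)"
proof (cases "U \<subseteq> W")
  case False
  then obtain x where x: "x \<in> U" "x \<notin> W"
    by blast
  then obtain t where t: "x - t *s g \<in> W"
    using \<open>U \<subseteq> span (insert g W)\<close> mem_span_insert_subspace[OF W] by blast
  have "t *s g \<in> U"
    using subspace_diff[OF U x(1)] t \<open>W \<subseteq> U\<close> by force
  have "\<not> p dvd t"
  proof
    assume "p dvd t"
    then obtain z where "t = p * z"
      by (elim dvdE)
    then have "t *s g \<in> W"
      using subspace_scale[OF W pg, of z] by (simp add: mult.commute)
    with t x(2) show False
      using subspace_add[OF W] by fastforce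
  qed
  then obtain u where "1 = t * u"
    using unit_or_dvd by (blast elim: dvdE)
  then have "g \<in> U"
    using subspace_scale[OF U \<open>t *s g \<in> U\<close>, of u] by (simp add: mult.commute)
  then have "span (insert g W) \<subseteq> U"
    using \<open>W \<subseteq> U\<close> U by (intro span_minimal) auto
  with \<open>U \<subseteq> span (insert g W)\<close> have "U = span (insert g W)"
    by (rule subset_antisym)
  then show ?thesis ..
next
  case True
  from this \<open>W \<subseteq> U\<close> have "U = W"
    by (rule subset_antisym)
  then show ?thesis ..
qed

lemma quotient_length_le_simple_extension:
  assumes W: "subspace W" and pg: "p *s g \<in> W"
  shows "quotient_length_le scale W (span (insert g W)) 1"
  unfolding quotient_length_le_def
proof (intro allI impI)
  fix c l assume c: "submodule_chain scale W (span (insert g W)) c l"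
  have members: "subspace (c i)" "W \<subseteq> c i" "c i \<subseteq> span (insert g W)" if "i \<le> l" for i
    using c that unfolding submodule_chain_def by auto
  show "l \<le> 1"
  proof (rule ccontr)
    assume "\<not> l \<le> 1"
    with c have "c 0 \<subset> c 1" "c 1 \<subset> c 2"
      unfolding submodule_chain_def by (simp_all add: numeral_2_eq_2)
    moreover have "W \<subseteq> c 0" "c 2 \<subseteq> span (insert g W)"
      using members \<open>\<not> l \<le> 1\<close> by simp_all
    moreover have "c 1 = W \<or> c 1 = span (insert g W)"
      using members[of 1] \<open>\<not> l \<le> 1\<close> subspace_between_simple_extension[OF W pg] by simp
    ultimately show False
      by auto
  qed
qed

lemma quotient_length_le_cyclic_extension:
  assumes W: "subspace W" and "p ^ K *s g \<in> W"
  shows "quotient_length_le scale W (span (insert g W)) K"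
  using assms(2)
proof (induction K arbitrary: g)
  case 0
  then have "span (insert g W) \<subseteq> W"
    using W by (intro span_minimal) auto
  then show ?case
    by (rule quotient_length_le_zero)
next
  case (Suc K)
  let ?B = "span (insert (p *s g) W)"
  have "p *s g \<in> span (insert g W)"
    by (intro span_scale span_base) simp
  then have B_sub: "?B \<subseteq> span (insert g W)"
    by (intro span_minimal) (auto intro: span_base)
  have span_eq: "span (insert g ?B) = span (insert g W)"
  proof
    show "span (insert g ?B) \<subseteq> span (insert g W)"
      using B_sub by (intro span_minimal) (auto intro: span_base)
    show "span (insert g W) \<subseteq> span (insert g ?B)"
      using span_superset[of "insert (p *s g) W"] by (intro span_mono) blast
  qed
  have "quotient_length_le scale W ?B K"
    using Suc by (simp add: mult.commute)
  moreover have "quotient_length_le scale ?B (span (insert g W)) 1"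
    using quotient_length_le_simple_extension[of ?B g] span_eq by (simp add: span_base)
  ultimately have "quotient_length_le scale W (span (insert g W)) (K + 1)"
    using B_sub by (intro quotient_length_le_add) (auto intro: span_base)
  then show ?case
    by simp
qed

lemma annihilator_dvd:
  assumes W: "subspace W" and "p ^ t *s g \<notin> W" and "r *s g \<in> W"
  shows "p ^ Suc t dvd r"
proof -
  have p_dvd: "p dvd r" if notin: "p ^ t *s g \<notin> W" and "r *s g \<in> W" for t g r
  proof -
    have "\<not> r dvd 1"
    proof
      assume "r dvd 1"
      then obtain u where "1 = r * u"
        by (elim dvdE)
      then have "g \<in> W"
        using subspace_scale[OF W \<open>r *s g \<in> W\<close>, of u] by (simp add: mult.commute)
      with notin show False
        using subspace_scale[OF W] by blast
    qed
    then show ?thesis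
      using unit_or_dvd by blast
  qed
  from assms(2,3) show ?thesis
  proof (induction t arbitrary: g r)
    case 0
    then show ?case
      using p_dvd[of 0 g r] by simp
  next
    case (Suc t g r)
    obtain x where x: "r = p * x"
      using p_dvd[OF Suc.prems] by (elim dvdE)
    have "p ^ t *s (p *s g) \<notin> W" and "x *s (p *s g) \<in> W"
      using Suc.prems x by (simp_all add: mult.commute)
    then have "p ^ Suc t dvd x"
      by (rule Suc.IH)
    with x show ?case
      by (simp add: mult_dvd_mono)
  qed
qed

text \<open>V/W is a quotient of the direct sum of the cyclic modules R/(p^(k i)), i < n, via the images u i
  of their generators, and it is generated by the j elements g i.\<close>
definition presented_quotient ::
  "nat \<Rightarrow> (nat \<Rightarrow> nat) \<Rightarrow> (nat \<Rightarrow> 'b) \<Rightarrow> nat \<Rightarrow> (nat \<Rightarrow> 'b) \<Rightarrow> 'b set \<Rightarrow> 'b set \<Rightarrow> bool" where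
  "presented_quotient n k u j g W V \<longleftrightarrow>
     (\<forall>i i'. i \<le> i' \<longrightarrow> i' < n \<longrightarrow> k i' \<le> k i) \<and> j \<le> n \<and>
     subspace W \<and> subspace V \<and> W \<subseteq> V \<and> (\<forall>i<n. p ^ k i *s u i \<in> W) \<and>
     generates_mod scale W V u n \<and> generates_mod scale W V g j"

lemma presented_quotient_annihilated:
  assumes P: "presented_quotient n k u j g W V" and "0 < n" and "v \<in> V"
  shows "p ^ k 0 *s v \<in> W"
proof (rule generates_mod_scale_mem)
  show "subspace W" and "generates_mod scale W V u n"
    using P unfolding presented_quotient_def by simp_all
  show "p ^ k 0 *s u i \<in> W" if "i < n" for i
  proof -
    have "k i \<le> k 0" and "p ^ k i *s u i \<in> W" and "subspace W"
      using P that unfolding presented_quotient_def by simp_all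
    then have "p ^ (k 0 - k i) *s p ^ k i *s u i \<in> W"
      using subspace_scale by blast
    then show ?thesis
      using \<open>k i \<le> k 0\<close> by (simp flip: power_add)
  qed
qed (rule \<open>v \<in> V\<close>)

lemma presented_quotient_truncate:
  assumes P: "presented_quotient n k u j g W V" and kills: "\<forall>v\<in>V. p ^ t *s v \<in> W"
  shows "presented_quotient n (\<lambda>i. min (k i) t) u j g W V"
proof -
  have "p ^ min (k i) t *s u i \<in> W" if "i < n" for i
  proof (cases "k i \<le> t")
    case True
    then show ?thesis
      using P that unfolding presented_quotient_def by simp
  next
    case False
    have "u i \<in> V"
      using P that unfolding presented_quotient_def generates_mod_def by blast
    with False kills show ?thesis
      by simp
  qed
  with P show ?thesis
    unfolding presented_quotient_def by (simp add: min.coboundedI1)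
qed

lemma presented_quotient_exchange:
  assumes P: "presented_quotient n k u j g W V" and "q < j" and "pp < n" and "k pp = k 0"
    and r: "g q - (\<Sum>i<n. r i *s u i) \<in> W" and unit: "r pp dvd 1"
  shows "presented_quotient (n - 1) (k \<circ> Suc) (u \<circ> Transposition.transpose 0 pp \<circ> Suc) (j - 1)
    (g \<circ> Transposition.transpose 0 q \<circ> Suc) (span (insert (g q) W)) V"
proof -
  have W: "subspace W" and V: "subspace V" and "W \<subseteq> V"
    and gen_u: "generates_mod scale W V u n" and gen_g: "generates_mod scale W V g j"
    using P unfolding presented_quotient_def by simp_all
  have "g q \<in> V"
    using gen_g \<open>q < j\<close> unfolding generates_mod_def by blast
  with V \<open>W \<subseteq> V\<close> have W'_sub: "span (insert (g q) W) \<subseteq> V"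
    by (intro span_minimal) auto
  have "p ^ k (Suc i) *s u (Transposition.transpose 0 pp (Suc i)) \<in> span (insert (g q) W)"
    if "i < n - 1" for i
  proof -
    have "Transposition.transpose 0 pp (Suc i) < n"
      using that \<open>pp < n\<close> by (auto simp: Transposition.transpose_def)
    moreover have "k (Transposition.transpose 0 pp (Suc i)) = k (Suc i)"
      using \<open>k pp = k 0\<close> by (intro transpose_apply_eq) simp
    ultimately have "p ^ k (Suc i) *s u (Transposition.transpose 0 pp (Suc i)) \<in> W"
      using P unfolding presented_quotient_def by metis
    then show ?thesis
      by (simp add: span_base)
  qed
  moreover have "generates_mod scale (span (insert (g q) W)) V (u \<circ> Transposition.transpose 0 pp \<circ> Suc) (n - 1)"
    by (rule generates_mod_exchange[OF W gen_u \<open>pp < n\<close> r unit])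
  moreover have "g q - (\<Sum>i<j. (if i = q then 1 else 0) *s g i) \<in> W"
    using \<open>q < j\<close> W by (simp add: if_distrib[of "\<lambda>a. a *s _"] subspace_0 cong: if_cong)
  then have "generates_mod scale (span (insert (g q) W)) V (g \<circ> Transposition.transpose 0 q \<circ> Suc) (j - 1)"
    by (rule generates_mod_exchange[OF W gen_g \<open>q < j\<close>]) simp
  ultimately show ?thesis
    using P W'_sub unfolding presented_quotient_def by auto
qed

lemma unit_coefficient_of_maximal_order:
  fixes n :: nat
  assumes W: "subspace W" and torsion: "\<And>i. i < n \<Longrightarrow> p ^ k i *s u i \<in> W"
    and bound: "\<And>i. i < n \<Longrightarrow> k i \<le> K"
    and notin: "p ^ (K - 1) *s (\<Sum>i<n. r i *s u i) \<notin> W"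
  obtains i where "i < n" and "k i = K" and "0 < K" and "r i dvd 1"
proof -
  have "\<exists>i<n. p ^ (K - 1) *s r i *s u i \<notin> W"
  proof (rule ccontr)
    assume "\<not> ?thesis"
    then have "(\<Sum>i<n. p ^ (K - 1) *s r i *s u i) \<in> W"
      by (intro subspace_sum[OF W]) auto
    with notin show False
      by (simp add: scale_sum_right)
  qed
  then obtain i where i: "i < n" and notin_i: "p ^ (K - 1) *s r i *s u i \<notin> W"
    by blast
  have "\<not> k i \<le> K - 1"
  proof
    assume "k i \<le> K - 1"
    then have "K - 1 = (K - 1 - k i) + k i"
      by simp
    then have "p ^ (K - 1) = p ^ (K - 1 - k i) * p ^ k i"
      by (metis power_add)
    then have "p ^ (K - 1) * r i = (p ^ (K - 1 - k i) * r i) * p ^ k i"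
      by (simp add: ac_simps)
    then show False
      using notin_i subspace_scale[OF W torsion[OF i], of "p ^ (K - 1 - k i) * r i"] by simp
  qed
  with bound[OF i] have "k i = K" and "0 < K"
    by linarith+
  moreover have "r i dvd 1"
  proof (rule ccontr)
    assume "\<not> r i dvd 1"
    then obtain z where "r i = p * z"
      using unit_or_dvd by (blast elim: dvdE)
    moreover have "p ^ K = p * p ^ (K - 1)"
      using \<open>0 < K\<close> by (simp add: power_eq_if)
    ultimately have "p ^ (K - 1) * r i = z * p ^ k i"
      using \<open>k i = K\<close> by (simp add: ac_simps)
    then show False
      using notin_i subspace_scale[OF W torsion[OF i], of z] by simp
  qed
  ultimately show thesis
    using i that by blast
qed

lemma presented_quotient_cyclic_submodule:
  assumes P: "presented_quotient n k u j g W V" and "q < j" and "0 < n"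
  shows "quotient_length_le scale W (span (insert (g q) W)) (k 0)"
    and "span (insert (g q) W) \<subseteq> V"
proof -
  have W: "subspace W" and V: "subspace V" and "W \<subseteq> V" and "g q \<in> V"
    using P \<open>q < j\<close> unfolding presented_quotient_def generates_mod_def by simp_all
  show "quotient_length_le scale W (span (insert (g q) W)) (k 0)"
    using presented_quotient_annihilated[OF P \<open>0 < n\<close> \<open>g q \<in> V\<close>]
    by (rule quotient_length_le_cyclic_extension[OF W])
  show "span (insert (g q) W) \<subseteq> V"
    using \<open>g q \<in> V\<close> \<open>W \<subseteq> V\<close> V by (intro span_minimal) auto
qed

lemma presented_quotient_nontrivial:
  assumes P: "presented_quotient n k u j g W V" and "\<not> V \<subseteq> W"
  shows "0 < j" and "0 < n" and "0 < k 0"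
proof -
  have "generates_mod scale W V g j" and "j \<le> n"
    using P unfolding presented_quotient_def by simp_all
  show "0 < j"
  proof (rule ccontr)
    assume "\<not> 0 < j"
    with \<open>generates_mod scale W V g j\<close> have "V \<subseteq> W"
      unfolding generates_mod_def by auto
    with \<open>\<not> V \<subseteq> W\<close> show False ..
  qed
  with \<open>j \<le> n\<close> show "0 < n"
    by simp
  show "0 < k 0"
  proof (rule ccontr)
    assume "\<not> 0 < k 0"
    then have "V \<subseteq> W"
      using presented_quotient_annihilated[OF P \<open>0 < n\<close>] by auto
    with \<open>\<not> V \<subseteq> W\<close> show False ..
  qed
qed

lemma presented_quotient_cases:
  assumes P: "presented_quotient n k u j g W V" and "\<not> V \<subseteq> W"
  obtains (truncate) "0 < j" and "0 < k 0" and "\<forall>v\<in>V. p ^ (k 0 - 1) *s v \<in> W"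
  | (exchange) q pp r where "q < j" and "pp < n" and "k pp = k 0" and "0 < k 0" and "r pp dvd 1"
      and "g q - (\<Sum>i<n. r i *s u i) \<in> W" and "p ^ (k 0 - 1) *s g q \<notin> W"
proof (cases "\<forall>v\<in>V. p ^ (k 0 - 1) *s v \<in> W")
  case True
  with presented_quotient_nontrivial[OF P \<open>\<not> V \<subseteq> W\<close>] show thesis
    by (intro truncate) simp_all
next
  case False
  have W: "subspace W" and gen_u: "generates_mod scale W V u n" and gen_g: "generates_mod scale W V g j"
    using P unfolding presented_quotient_def by simp_all
  have torsion: "p ^ k i *s u i \<in> W" and bound: "k i \<le> k 0" if "i < n" for i
    using P that unfolding presented_quotient_def by blast+
  from False obtain v where "v \<in> V" and "p ^ (k 0 - 1) *s v \<notin> W"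
    by blast
  then obtain q where q: "q < j" and q_notin: "p ^ (k 0 - 1) *s g q \<notin> W"
    using generates_mod_scale_mem[OF W gen_g] by blast
  then have "g q \<in> V"
    using gen_g unfolding generates_mod_def by blast
  then obtain r where r: "g q - (\<Sum>i<n. r i *s u i) \<in> W"
    using gen_u unfolding generates_mod_def by blast
  have notin: "p ^ (k 0 - 1) *s (\<Sum>i<n. r i *s u i) \<notin> W"
  proof
    assume "p ^ (k 0 - 1) *s (\<Sum>i<n. r i *s u i) \<in> W"
    with subspace_add[OF W subspace_scale[OF W r]]
    have "p ^ (k 0 - 1) *s (g q - (\<Sum>i<n. r i *s u i)) + p ^ (k 0 - 1) *s (\<Sum>i<n. r i *s u i) \<in> W"
      by blast
    with q_notin show False
      by (simp add: scale_right_diff_distrib)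
  qed
  obtain pp where "pp < n" "k pp = k 0" "0 < k 0" "r pp dvd 1"
    by (rule unit_coefficient_of_maximal_order[OF W torsion bound notin])
  with q q_notin r show thesis
    by (intro exchange) simp_all
qed

lemma quotient_length_le_presented:
  assumes "presented_quotient n k u j g W V"
  shows "quotient_length_le scale W V (\<Sum>i<j. k i)"
  using assms
proof (induction "\<Sum>i<n. k i" arbitrary: n k u j g W rule: less_induct)
  case less
  note P = less.prems
  show ?case
  proof (cases "V \<subseteq> W")
    case True
    then show ?thesis
      using quotient_length_le_zero quotient_length_le_mono by blast
  next
    case False
    from P False show ?thesis
    proof (cases rule: presented_quotient_cases)
      case truncate
      let ?k = "\<lambda>i. min (k i) (k 0 - 1)"
      have "j \<le> n"
        using P unfolding presented_quotient_def by simp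
      with truncate have "(\<Sum>i<n. ?k i) < (\<Sum>i<n. k i)" and j_less: "(\<Sum>i<j. ?k i) < (\<Sum>i<j. k i)"
        using sum_lessThan_min_less by simp_all
      then have "quotient_length_le scale W V (\<Sum>i<j. ?k i)"
        using less.hyps presented_quotient_truncate[OF P truncate(3)] by blast
      with j_less show ?thesis
        using quotient_length_le_mono by simp
    next
      case (exchange q pp r)
      have "0 < n" and "0 < j"
        using \<open>pp < n\<close> \<open>q < j\<close> by simp_all
      have "subspace V"
        using P unfolding presented_quotient_def by simp
      have "quotient_length_le scale (span (insert (g q) W)) V (\<Sum>i<j - 1. (k \<circ> Suc) i)"
        using less.hyps[OF _ presented_quotient_exchange[OF P exchange(1-3,6,5)]]
          sum_lessThan_shift_pred[OF \<open>0 < n\<close>, of k] \<open>0 < k 0\<close> by simp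
      then show ?thesis
        unfolding sum_lessThan_shift_pred[OF \<open>0 < j\<close>, of k]
        using presented_quotient_cyclic_submodule[OF P \<open>q < j\<close> \<open>0 < n\<close>] \<open>subspace V\<close>
        by (intro quotient_length_le_add) (auto intro: span_base)
    qed
  qed
qed

end

section \<open>Lifting a quotient to a direct summand\<close>

lemma (in module_hom) module_hom_inv_into:
  assumes A: "m1.subspace A" and inj: "inj_on f A" and onto: "f ` A = UNIV"
  shows "module_hom s2 s1 (inv_into A f)"
proof (rule module_hom.intro[OF m2.module_axioms m1.module_axioms], unfold_locales)
  have h: "inv_into A f v \<in> A" "f (inv_into A f v) = v" for v
    using onto by (simp_all add: inv_into_into f_inv_into_f)
  show "inv_into A f (v + w) = inv_into A f v + inv_into A f w" for v w
    using h by (intro inv_into_f_eq[OF inj] m1.subspace_add[OF A]) (simp_all add: add)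
  show "inv_into A f (c *b v) = c *a inv_into A f v" for c v
    using h by (intro inv_into_f_eq[OF inj] m1.subspace_scale[OF A]) (simp_all add: scale)
qed

locale dvr_module_hom = N: dvr_module s2 p + module_hom s1 s2 f
  for s1 :: "'a::comm_ring_1 \<Rightarrow> 'b::ab_group_add \<Rightarrow> 'b" (infixr \<open>*a\<close> 75)
    and s2 :: "'a \<Rightarrow> 'c::ab_group_add \<Rightarrow> 'c" (infixr \<open>*b\<close> 75)
    and f :: "'b \<Rightarrow> 'c" and p :: 'a
begin

text \<open>Some submodule of the source is mapped by f isomorphically onto V/W.\<close>
definition liftable_quotient :: "'c set \<Rightarrow> 'c set \<Rightarrow> bool" where
  "liftable_quotient W V \<longleftrightarrow> (\<exists>A. m1.subspace A \<and> f ` A \<subseteq> V \<and>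
     (\<forall>a\<in>A. f a \<in> W \<longrightarrow> a = 0) \<and> (\<forall>v\<in>V. \<exists>a\<in>A. v - f a \<in> W))"

lemma liftable_quotient_trivial:
  assumes "N.subspace V" and "V \<subseteq> W"
  shows "liftable_quotient W V"
  unfolding liftable_quotient_def
  using assms N.subspace_0 by (intro exI[of _ "{0}"]) auto

lemma lift_scale_eq_zero:
  assumes W: "N.subspace W" and y: "y - f x \<in> W"
    and torsion: "p ^ K *a x = 0" and order: "p ^ (K - 1) *b y \<notin> W" and "0 < K"
    and "t *b f x \<in> W"
  shows "t *a x = 0"
proof -
  have "t *b f x + t *b (y - f x) \<in> W"
    by (rule N.subspace_add[OF W \<open>t *b f x \<in> W\<close> N.subspace_scale[OF W y]])
  then have "t *b y \<in> W"
    by (simp add: N.scale_right_diff_distrib)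
  then have "p ^ Suc (K - 1) dvd t"
    by (rule N.annihilator_dvd[OF W order])
  then obtain z where "t = p ^ K * z"
    using \<open>0 < K\<close> by (auto elim: dvdE)
  then show ?thesis
    using torsion by (simp add: mult.commute flip: m1.scale_scale)
qed

lemma liftable_quotient_extend:
  assumes W: "N.subspace W" and V: "N.subspace V"
    and lift: "liftable_quotient (N.span (insert y W)) V"
    and y: "y - f x \<in> W" and fx: "f x \<in> V"
    and torsion: "p ^ K *a x = 0" and order: "p ^ (K - 1) *b y \<notin> W" and "0 < K"
  shows "liftable_quotient W V"
proof -
  let ?W' = "N.span (insert y W)"
  obtain A where A: "m1.subspace A" "f ` A \<subseteq> V" and A_inj: "\<forall>a\<in>A. f a \<in> ?W' \<longrightarrow> a = 0"
    and A_surj: "\<forall>v\<in>V. \<exists>a\<in>A. v - f a \<in> ?W'"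
    using lift unfolding liftable_quotient_def by blast
  let ?A = "m1.span (insert x A)"
  have mem_A: "a \<in> ?A \<longleftrightarrow> (\<exists>t. a - t *a x \<in> A)" for a
    by (rule m1.mem_span_insert_subspace[OF A(1)])
  have mem_W': "v \<in> ?W' \<longleftrightarrow> (\<exists>t. v - t *b y \<in> W)" for v
    by (rule N.mem_span_insert_subspace[OF W])
  have "f ` ?A \<subseteq> V"
  proof
    fix v assume "v \<in> f ` ?A"
    then obtain a t where "v = f a" "a - t *a x \<in> A"
      using mem_A by blast
    then have "v = f (a - t *a x) + t *b f x"
      by (simp add: diff scale)
    then show "v \<in> V"
      using A(2) \<open>a - t *a x \<in> A\<close> fx V N.subspace_add N.subspace_scale by blast
  qed
  moreover have "\<exists>a\<in>?A. v - f a \<in> W" if "v \<in> V" for v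
  proof -
    obtain a t where a: "a \<in> A" and t: "v - f a - t *b y \<in> W"
      using A_surj \<open>v \<in> V\<close> mem_W' by blast
    have "v - f (a + t *a x) = (v - f a - t *b y) + t *b (y - f x)"
      by (simp add: add scale algebra_simps)
    also have "\<dots> \<in> W"
      using t y W N.subspace_add N.subspace_scale by blast
    finally have "v - f (a + t *a x) \<in> W" .
    moreover have "a + t *a x \<in> ?A"
      unfolding mem_A using a by (intro exI[of _ t]) simp
    ultimately show ?thesis
      by blast
  qed
  moreover have "a = 0" if "a \<in> ?A" and "f a \<in> W" for a
  proof -
    obtain t where a1: "a - t *a x \<in> A"
      using mem_A \<open>a \<in> ?A\<close> by blast
    have "f (a - t *a x) - (- t) *b y = f a + t *b (y - f x)"
      by (simp add: diff scale algebra_simps)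
    also have "\<dots> \<in> W"
      using \<open>f a \<in> W\<close> y W N.subspace_add N.subspace_scale by blast
    finally have "a - t *a x = 0"
      using A_inj a1 mem_W' by blast
    then have "t *b f x \<in> W"
      using \<open>f a \<in> W\<close> by (simp add: scale)
    then have "t *a x = 0"
      by (rule lift_scale_eq_zero[OF W y torsion order \<open>0 < K\<close>])
    with \<open>a - t *a x = 0\<close> show "a = 0"
      by simp
  qed
  ultimately show ?thesis
    unfolding liftable_quotient_def by (intro exI[of _ ?A]) auto
qed

lemma presented_quotient_lift_exchange:
  assumes P: "N.presented_quotient n k (f \<circ> e) j g W V" and torsion: "\<forall>i<n. p ^ k i *a e i = 0"
    and "q < j" and "pp < n" and "k pp = k 0"
    and "g q - (\<Sum>i<n. r i *b (f \<circ> e) i) \<in> W" and "r pp dvd 1"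
  shows "N.presented_quotient (n - 1) (k \<circ> Suc) (f \<circ> (e \<circ> Transposition.transpose 0 pp \<circ> Suc))
      (j - 1) (g \<circ> Transposition.transpose 0 q \<circ> Suc) (N.span (insert (g q) W)) V"
    and "\<forall>i<n - 1. p ^ (k \<circ> Suc) i *a (e \<circ> Transposition.transpose 0 pp \<circ> Suc) i = 0"
proof -
  show "N.presented_quotient (n - 1) (k \<circ> Suc) (f \<circ> (e \<circ> Transposition.transpose 0 pp \<circ> Suc))
      (j - 1) (g \<circ> Transposition.transpose 0 q \<circ> Suc) (N.span (insert (g q) W)) V"
    using N.presented_quotient_exchange[OF P assms(3-7)] by (simp only: comp_assoc)
  show "\<forall>i<n - 1. p ^ (k \<circ> Suc) i *a (e \<circ> Transposition.transpose 0 pp \<circ> Suc) i = 0"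
  proof (intro allI impI)
    fix i assume "i < n - 1"
    then have "Transposition.transpose 0 pp (Suc i) < n"
      using \<open>pp < n\<close> by (auto simp: Transposition.transpose_def)
    moreover have "k (Transposition.transpose 0 pp (Suc i)) = k (Suc i)"
      using \<open>k pp = k 0\<close> by (intro transpose_apply_eq) simp
    ultimately show "p ^ (k \<circ> Suc) i *a (e \<circ> Transposition.transpose 0 pp \<circ> Suc) i = 0"
      using torsion by fastforce
  qed
qed

lemma presented_quotient_lift_combination:
  assumes P: "N.presented_quotient n k (f \<circ> e) j g W V" and torsion: "\<forall>i<n. p ^ k i *a e i = 0"
  shows "f (\<Sum>i<n. r i *a e i) \<in> V" and "p ^ k 0 *a (\<Sum>i<n. r i *a e i) = 0"
proof -
  have V: "N.subspace V" and "generates_mod s2 W V (f \<circ> e) n"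
    and bound: "\<And>i. i < n \<Longrightarrow> k i \<le> k 0"
    using P unfolding N.presented_quotient_def by auto
  then show "f (\<Sum>i<n. r i *a e i) \<in> V"
    unfolding generates_mod_def by (auto simp: sum scale intro: N.subspace_sum N.subspace_scale)
  have "p ^ k 0 *a (\<Sum>i<n. r i *a e i) \<in> {0}"
    using torsion bound by (intro m1.pow_scale_sum_mem) auto
  then show "p ^ k 0 *a (\<Sum>i<n. r i *a e i) = 0"
    by simp
qed

lemma liftable_quotient_presented:
  assumes "N.presented_quotient n k (f \<circ> e) j g W V"
    and "\<forall>i<n. p ^ k i *a e i = 0"
    and "\<exists>c. submodule_chain s2 W V c (\<Sum>i<j. k i)"
  shows "liftable_quotient W V"
  using assms
proof (induction "\<Sum>i<n. k i" arbitrary: n k e j g W rule: less_induct)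
  case less
  note P = less.prems(1) and torsion = less.prems(2)
  obtain c where chain: "submodule_chain s2 W V c (\<Sum>i<j. k i)"
    using less.prems(3) by blast
  have W: "N.subspace W" and V: "N.subspace V"
    using P unfolding N.presented_quotient_def by simp_all
  show ?case
  proof (cases "V \<subseteq> W")
    case True
    with V show ?thesis
      by (rule liftable_quotient_trivial)
  next
    case False
    from P False show ?thesis
    proof (cases rule: N.presented_quotient_cases)
      case truncate
      have "quotient_length_le s2 W V (\<Sum>i<j. min (k i) (k 0 - 1))"
        using P truncate(3) by (intro N.quotient_length_le_presented N.presented_quotient_truncate)
      with chain have "(\<Sum>i<j. k i) \<le> (\<Sum>i<j. min (k i) (k 0 - 1))"
        unfolding quotient_length_le_def by blast
      with truncate show ?thesis
        using sum_lessThan_min_less[of j k] by simp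
    next
      case (exchange q pp r)
      let ?W' = "N.span (insert (g q) W)"
      have "0 < n" and "0 < j"
        using \<open>pp < n\<close> \<open>q < j\<close> by simp_all
      note lower = N.presented_quotient_cyclic_submodule[OF P \<open>q < j\<close> \<open>0 < n\<close>]
      have "W \<subseteq> ?W'"
        by (auto intro: N.span_base)
      then obtain c' where "submodule_chain s2 ?W' V c' (\<Sum>i<j - 1. (k \<circ> Suc) i)"
        using N.submodule_chain_upper[OF N.subspace_span V _ lower(2) lower(1)]
          chain[unfolded sum_lessThan_shift_pred[OF \<open>0 < j\<close>, of k]] by blast
      then have "liftable_quotient ?W' V"
        using less.hyps[OF _ presented_quotient_lift_exchange[OF P torsion exchange(1-3,6,5)]]
          sum_lessThan_shift_pred[OF \<open>0 < n\<close>, of k] \<open>0 < k 0\<close> by auto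
      moreover have "g q - f (\<Sum>i<n. r i *a e i) \<in> W"
        using exchange(6) by (simp add: sum scale)
      ultimately show ?thesis
        using liftable_quotient_extend[OF W V] presented_quotient_lift_combination[OF P torsion]
          exchange(7) \<open>0 < k 0\<close> by blast
    qed
  qed
qed

lemma iso_direct_summand_if_liftable:
  assumes "liftable_quotient {0} UNIV"
  shows "iso_direct_summand s2 s1"
proof -
  obtain A where A: "m1.subspace A" and inj: "\<forall>a\<in>A. f a = 0 \<longrightarrow> a = 0"
    and onto: "\<forall>v. \<exists>a\<in>A. v = f a"
    using assms unfolding liftable_quotient_def by auto
  have inj_on_A: "inj_on f A"
    using inj inj_on_iff_eq_0[OF A] by blast
  have onto_A: "f ` A = UNIV"
    using onto by blast
  let ?h = "inv_into A f"
  have h: "?h v \<in> A" "f (?h v) = v" for v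
    using onto_A by (simp_all add: inv_into_into f_inv_into_f)
  have "inj ?h"
    by (metis h(2) injI)
  moreover have "range ?h = A"
  proof
    show "range ?h \<subseteq> A"
      using h(1) by blast
    show "A \<subseteq> range ?h"
    proof
      fix a assume "a \<in> A"
      with inj_on_A have "?h (f a) = a"
        by simp
      then show "a \<in> range ?h"
        by (metis rangeI)
    qed
  qed
  moreover have "A \<inter> {x. f x = 0} = {0}"
    using inj m1.subspace_0[OF A] by auto
  moreover have "\<exists>a\<in>A. \<exists>b\<in>{x. f x = 0}. x = a + b" for x
    using h by (intro bexI[of _ "?h (f x)"] bexI[of _ "x - ?h (f x)"]) (simp_all add: diff)
  ultimately show ?thesis
    unfolding iso_direct_summand_def
    using A subspace_kernel module_hom_inv_into[OF A inj_on_A onto_A] by blast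
qed

lemma presented_quotient_of_surj:
  assumes "surj f" and e: "\<And>x. \<exists>r. x = (\<Sum>i<n. r i *a e i)" and g: "N.span (g ` {..<j}) = UNIV"
    and "\<And>i i'. i \<le> i' \<Longrightarrow> i' < n \<Longrightarrow> k i' \<le> k i" and "j \<le> n"
    and torsion: "\<And>i. i < n \<Longrightarrow> p ^ k i *a e i = 0"
  shows "N.presented_quotient n k (f \<circ> e) j g {0} UNIV"
proof -
  have "\<exists>r. v - (\<Sum>i<n. r i *b (f \<circ> e) i) \<in> {0}" for v
  proof -
    obtain x where "v = f x"
      using \<open>surj f\<close> by (metis surjD)
    moreover obtain r where "x = (\<Sum>i<n. r i *a e i)"
      using e by blast
    ultimately show ?thesis
      by (intro exI[of _ r]) (simp add: sum scale)
  qed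
  moreover have "\<exists>r. v - (\<Sum>i<j. r i *b g i) \<in> {0}" for v
    using N.span_image_lessThan_sum[of v g j] g by simp
  moreover have "p ^ k i *b (f \<circ> e) i \<in> {0}" if "i < n" for i
    using torsion[OF that] by (simp flip: scale)
  ultimately show ?thesis
    using assms unfolding N.presented_quotient_def generates_mod_def by auto
qed

end

theorem lemma4p6:
  fixes m :: "'a::idom set"
    and sM :: "'a \<Rightarrow> 'm::ab_group_add \<Rightarrow> 'm"
    and sN :: "'a \<Rightarrow> 'n::ab_group_add \<Rightarrow> 'n"
    and k :: "nat \<Rightarrow> nat" and n j :: nat
  assumes dvr: "is_DVR TYPE('a)"
    and max: "maximal_ideal m"
    and modM: "module sM" and modN: "module sN"
    and k_mono: "\<And>i i'. i \<le> i' \<Longrightarrow> i' < n \<Longrightarrow> k i' \<le> k i"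
    and M_iso: "iso_sum_cyclic sM m k n"
    and quot: "\<exists>f. module_hom sM sN f \<and> surj f"
    and gen: "\<exists>g :: nat \<Rightarrow> 'n. module.span sN (g ` {..<j}) = UNIV"
    and jn: "j \<le> n"
  shows "module_length sN \<le> enat (\<Sum>i<j. k i)
    \<and> (module_length sN = enat (\<Sum>i<j. k i) \<longrightarrow> iso_direct_summand sN sM)"
proof -
  obtain p where m: "m = {p * x | x. True}" and unit_or_dvd: "\<And>r. r dvd 1 \<or> p dvd r"
    using DVR_uniformizer[OF dvr max] by blast
  obtain f where f: "module_hom sM sN f" and "surj f"
    using quot by blast
  obtain g where g: "module.span sN (g ` {..<j}) = UNIV"
    using gen by blast
  interpret dvr_module_hom sM sN f p
    by (intro dvr_module_hom.intro dvr_module.intro dvr_module_axioms.intro modN f unit_or_dvd)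
  obtain e where e_gen: "\<And>x. \<exists>r. x = (\<Sum>i<n. sM (r i) (e i))"
    and e_torsion: "\<And>i. i < n \<Longrightarrow> sM (p ^ k i) (e i) = 0"
    using m1.iso_sum_cyclic_generators[OF M_iso[unfolded m]] by blast
  have P: "N.presented_quotient n k (f \<circ> e) j g {0} UNIV"
    by (rule presented_quotient_of_surj[OF \<open>surj f\<close> e_gen g k_mono jn e_torsion])
  have "module_length sN \<le> enat (\<Sum>i<j. k i)"
    by (rule N.module_length_le[OF N.quotient_length_le_presented[OF P]])
  moreover have "iso_direct_summand sN sM" if length_eq: "module_length sN = enat (\<Sum>i<j. k i)"
  proof -
    obtain c where "submodule_chain sN {0} UNIV c (\<Sum>i<j. k i)"
      using N.submodule_chain_of_module_length[OF length_eq] .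
    then have "liftable_quotient {0} UNIV"
      using liftable_quotient_presented[OF P] e_torsion by blast
    then show ?thesis
      by (rule iso_direct_summand_if_liftable)
  qed
  ultimately show ?thesis
    by blast
qed

end
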